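(* The expected numbers $E^S_n$ of napkinless diners under algorithm $S$ satisfy $E^S_1=E^S_2=0$, $E^S_3=1/2$, $E^S_4=3/4$, and, for all $n\ge 5$, \[ E^S_n=\frac12\left(E^S_{n-1}+E^S_{\lfloor\frac{n+1}{2}\rfloor}+E^S_{\lceil\frac{n+1}{2}\rceil}\right). \]
   Context: Seating model. A circular table has $n\ge 1$ seats, with exactly one napkin between each pair of adjacent seats ($n$ napkins in total). "Left" and "right" are from the perspective of a seated diner. Diners $1,\dots,n$ arrive in this order and a maitre d' chooses a seat for each. A preference order is $\sigma=(\sigma_1,\dots,\sigma_n)\in\{-1,1\}^n$, where $\sigma_j=+1$ means diner $j$ prefers the napkin on their right and $\sigma_j=-1$ the napkin on their left. When diner $j$ is seated, they take their preferred adjacent napkin if it is still on the table; otherwise the other adjacent napkin if still on the table; otherwise they are napkinless. Label the seats $1,\dots,n$ so that seat $1$ is the seat of diner $1$ and seats $2,3,\dots,n$ follow successively to the right of seat $1$. The "previous diner" means the most recently seated diner. Algorithm $S$ (napkin shunning). Seat diner 1 in seat 1. Then repeat: (S1) If all seats are filled, stop. If the seat adjacent to the previous diner on the side opposite to that diner's preference is empty, go to S2; otherwise go to S3. (S2) Seat the next diner in that seat; return to S1. (S3) A gap is a maximal block of consecutive empty seats (these are intervals of seat labels within $2,\dots,n$); take the gap containing the smallest-labelled empty seat, let $i$ be its number of seats, and seat the next diner in the $\lceil i/2\rceil$-th seat of this gap counting from its smallest-labelled seat (which counts as the 1st); return to S1. $\nu_S(\sigma)$ is the number of napkinless diners when the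 $n$ diners with preference order $\sigma$ are seated at the circular table with $n$ seats by algorithm $S$, and $E^S_n=2^{-n}\sum_{\sigma\in\{-1,1\}^n}\nu_S(\sigma)$. *)

theory Defs
  imports Complex_Main
begin

text \<open>Seats are labelled 1..n, seat k+1 immediately to the right of seat k (circularly,
  seat 1 to the right of seat n). Napkin k (1 \<le> k \<le> n) lies between seat k and the seat to
  its right; so the right napkin of seat s is napkin s and its left napkin is napkin s-1
  (napkin n for s = 1). Preferences are integers in {-1,1}: +1 = right, -1 = left.\<close>

definition right_seat :: "nat \<Rightarrow> nat \<Rightarrow> nat" where
  "right_seat n s = (if s = n then 1 else s + 1)"

definition left_seat :: "nat \<Rightarrow> nat \<Rightarrow> nat" where
  "left_seat n s = (if s = 1 then n else s - 1)"

definition right_napkin :: "nat \<Rightarrow> nat \<Rightarrow> nat" where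
  "right_napkin n s = s"

definition left_napkin :: "nat \<Rightarrow> nat \<Rightarrow> nat" where
  "left_napkin n s = (if s = 1 then n else s - 1)"

text \<open>Step S3: the gap containing the smallest-labelled empty seat m has length i
  (seats m, ..., m+i-1 empty, and m+i is filled or beyond n); choose its ceil(i/2)-th seat.\<close>
definition gap_seat :: "nat \<Rightarrow> nat set \<Rightarrow> nat" where
  "gap_seat n filled =
     (let m = Min ({2..n} - filled);
          i = (LEAST k. n < m + k \<or> m + k \<in> filled)
      in m + nat \<lceil>real i / 2\<rceil> - 1)"

definition next_seat :: "nat \<Rightarrow> nat set \<Rightarrow> nat \<Rightarrow> int \<Rightarrow> nat" where
  "next_seat n filled p q =
     (let t = (if q = 1 then left_seat n p else right_seat n p)
      in if t \<notin> filled then t else gap_seat n filled)"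

definition take_napkin :: "nat \<Rightarrow> nat set \<Rightarrow> nat \<Rightarrow> int \<Rightarrow> nat set \<times> nat" where
  "take_napkin n taken s x =
     (let pn = (if x = 1 then right_napkin n s else left_napkin n s);
          on = (if x = 1 then left_napkin n s else right_napkin n s)
      in if pn \<notin> taken then (insert pn taken, 0)
         else if on \<notin> taken then (insert on taken, 0)
         else (taken, 1))"

fun seat_rest :: "nat \<Rightarrow> nat set \<Rightarrow> nat set \<Rightarrow> nat \<Rightarrow> int \<Rightarrow> int list \<Rightarrow> nat" where
  "seat_rest n filled taken p q [] = 0"
| "seat_rest n filled taken p q (x # xs) =
     (let s = next_seat n filled p q;
          (taken', c) = take_napkin n taken s x
      in c + seat_rest n (insert s filled) taken' s x xs)"

definition nu_S :: "int list \<Rightarrow> nat" where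
  "nu_S \<sigma> = (case \<sigma> of [] \<Rightarrow> 0
     | x # xs \<Rightarrow> (let n = length \<sigma>; (taken, c) = take_napkin n {} 1 x
                 in c + seat_rest n {1} taken 1 x xs))"

definition pref_orders :: "nat \<Rightarrow> int list set" where
  "pref_orders n = {\<sigma>. length \<sigma> = n \<and> set \<sigma> \<subseteq> {-1, 1}}"

definition E_S :: "nat \<Rightarrow> real" where
  "E_S n = (\<Sum>\<sigma>\<in>pref_orders n. real (nu_S \<sigma>)) / 2 ^ n"

end

theory Submission
  imports Defs
begin

(* The empty seats always form gaps of consecutive seats, and the napkinless diners still to
   come can be counted gap by gap. A gap is closed if both napkins on its boundary are gone while
   all napkins inside it are still on the table; S3 starts such a gap at its middle seat. The
   only other kind of gap is a run: the previous diner sits next to it and took the napkin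
   facing away from it, so S2 fills the gap from that end, while the napkin at the far end is
   gone. Let closed_exp i and run_exp i be the expected numbers of napkinless diners in a closed
   gap and in a run of i seats. The next diner in a run of i seats gets a napkin and leaves, with
   probability 1/2 each, a run or a closed gap of i - 1 seats; the diner in the middle of a
   closed gap leaves a run on one side and a closed gap on the other, and is napkinless only if
   the gap has a single seat. After diner 1 the other n - 1 seats form a run, so
   E_S n = run_exp (n - 1), and eliminating closed_exp from the two recursions gives the
   recurrence. *)

(* A diner seated by S3 in a closed gap of k + 3 seats leaves (k + 2) div 2 seats on its left
   and (k + 3) div 2 on its right; the side of its preferred napkin becomes a closed gap, the
   other side a run. *)
fun closed_exp :: "nat \<Rightarrow> real" and run_exp :: "nat \<Rightarrow> real" where
  "closed_exp 0 = 0"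
| "closed_exp (Suc 0) = 1"
| "closed_exp (Suc (Suc 0)) = 1"
| "closed_exp (Suc (Suc (Suc k))) =
     (run_exp ((k + 2) div 2) + closed_exp ((k + 3) div 2)
      + closed_exp ((k + 2) div 2) + run_exp ((k + 3) div 2)) / 2"
| "run_exp 0 = 0"
| "run_exp (Suc k) = (run_exp k + closed_exp k) / 2"

lemma closed_exp_split:
  assumes "2 \<le> i"
  shows "closed_exp (Suc i) =
    (run_exp (i div 2) + closed_exp (i - i div 2) + closed_exp (i div 2) + run_exp (i - i div 2)) / 2"
proof -
  obtain k where "i = k + 2" using assms le_Suc_ex by force
  moreover have "k + 2 - (k + 2) div 2 = (k + 3) div 2" by simp
  ultimately show ?thesis by (simp add: numeral_3_eq_3)
qed

lemma run_exp_recurrence: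
  assumes "2 \<le> i"
  shows "run_exp (Suc (Suc i)) =
    (run_exp (Suc i) + run_exp (Suc (i div 2)) + run_exp (Suc ((i + 1) div 2))) / 2"
proof -
  have "i - i div 2 = (i + 1) div 2" by simp
  then show ?thesis using closed_exp_split[OF assms] by (simp add: field_simps)
qed

lemma pref_orders_0: "pref_orders 0 = {[]}"
  by (auto simp: pref_orders_def)

lemma pref_orders_Suc:
  "pref_orders (Suc L) = (#) (-1) ` pref_orders L \<union> (#) 1 ` pref_orders L"
proof -
  have "\<sigma> \<in> (#) (-1) ` pref_orders L \<union> (#) 1 ` pref_orders L" if "\<sigma> \<in> pref_orders (Suc L)" for \<sigma>
    using that by (cases \<sigma>) (auto simp: pref_orders_def)
  then show ?thesis by (auto simp: pref_orders_def)
qed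

lemma finite_pref_orders: "finite (pref_orders L)"
  by (induction L) (simp_all add: pref_orders_0 pref_orders_Suc)

lemma sum_pref_orders_Suc:
  "(\<Sum>\<sigma>\<in>pref_orders (Suc L). f \<sigma>) =
    (\<Sum>xs\<in>pref_orders L. f ((-1) # xs)) + (\<Sum>xs\<in>pref_orders L. f (1 # xs))"
proof -
  have "(#) (-1) ` pref_orders L \<inter> (#) (1::int) ` pref_orders L = {}" by auto
  then show ?thesis
    unfolding pref_orders_Suc by (simp add: sum.union_disjoint finite_pref_orders sum.reindex)
qed

lemma card_pref_orders: "card (pref_orders L) = 2 ^ L"
proof (induction L)
  case 0
  show ?case by (simp add: pref_orders_0)
next
  case (Suc L)
  have "card (pref_orders (Suc L)) = (\<Sum>\<sigma>\<in>pref_orders (Suc L). 1)" by simp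
  also have "\<dots> = 2 * card (pref_orders L)" by (simp only: sum_pref_orders_Suc) simp
  finally show ?case using Suc.IH by simp
qed

definition total_napkinless :: "nat \<Rightarrow> nat set \<Rightarrow> nat set \<Rightarrow> nat \<Rightarrow> int \<Rightarrow> nat \<Rightarrow> real" where
  "total_napkinless n filled taken p q L =
    (\<Sum>xs\<in>pref_orders L. real (seat_rest n filled taken p q xs))"

lemma total_napkinless_0: "total_napkinless n filled taken p q 0 = 0"
  by (simp add: total_napkinless_def pref_orders_0)

lemma total_napkinless_Suc:
  assumes "s = next_seat n filled p q"
    and "take_napkin n taken s (-1) = (T1, c1)" and "take_napkin n taken s 1 = (T2, c2)"
  shows "total_napkinless n filled taken p q (Suc L) =
    2 ^ L * (real c1 + real c2) + total_napkinless n (insert s filled) T1 s (-1) L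
      + total_napkinless n (insert s filled) T2 s 1 L"
  using assms
  by (simp add: total_napkinless_def sum_pref_orders_Suc sum.distrib card_pref_orders Let_def
      algebra_simps)

definition gap_seats :: "(nat \<times> nat) set \<Rightarrow> nat set" where
  "gap_seats G = (\<Union>g\<in>G. {fst g..snd g})"

definition gap_family :: "nat \<Rightarrow> (nat \<times> nat) set \<Rightarrow> bool" where
  "gap_family n G \<longleftrightarrow> finite G \<and> (\<forall>g\<in>G. 2 \<le> fst g \<and> fst g \<le> snd g \<and> snd g \<le> n) \<and>
     (\<forall>g\<in>G. \<forall>h\<in>G. g \<noteq> h \<longrightarrow> snd g + 1 < fst h \<or> snd h + 1 < fst g)"

lemma gap_seats_iff: "x \<in> gap_seats G \<longleftrightarrow> (\<exists>g\<in>G. fst g \<le> x \<and> x \<le> snd g)"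
  by (auto simp: gap_seats_def)

lemma gap_seats_Un: "gap_seats (G \<union> H) = gap_seats G \<union> gap_seats H"
  by (simp add: gap_seats_def)

lemma gap_seats_insert: "gap_seats (insert g G) = {fst g..snd g} \<union> gap_seats G"
  by (simp add: gap_seats_def)

lemma gap_family_finite: "gap_family n G \<Longrightarrow> finite G"
  by (simp add: gap_family_def)

lemma gap_family_bounds: "gap_family n G \<Longrightarrow> g \<in> G \<Longrightarrow> 2 \<le> fst g \<and> fst g \<le> snd g \<and> snd g \<le> n"
  by (simp add: gap_family_def)

lemma gap_family_sep:
  "gap_family n G \<Longrightarrow> g \<in> G \<Longrightarrow> h \<in> G \<Longrightarrow> g \<noteq> h \<Longrightarrow> snd g + 1 < fst h \<or> snd h + 1 < fst g"
  by (simp add: gap_family_def)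

lemma gap_seats_subset: "gap_family n G \<Longrightarrow> gap_seats G \<subseteq> {2..n}"
  by (force simp: gap_seats_iff dest: gap_family_bounds)

lemma gap_family_empty_iff: "gap_family n G \<Longrightarrow> gap_seats G = {} \<longleftrightarrow> G = {}"
  by (force simp: gap_seats_iff dest: gap_family_bounds)

lemma gap_family_subinterval_notin:
  assumes "gap_family n G" "(lo, hi) \<in> G" "lo \<le> a" "a \<le> b" "b \<le> hi"
  shows "(a, b) \<notin> G - {(lo, hi)}"
  using gap_family_sep[OF assms(1,2), of "(a, b)"] assms(3-5) by auto

lemma gap_family_neighbours:
  assumes G: "gap_family n G" and g: "(lo, hi) \<in> G" and filled: "filled = {1..n} - gap_seats G"
  shows "left_seat n lo \<in> filled" and "right_seat n hi \<in> filled"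
proof -
  have b: "2 \<le> lo" "lo \<le> hi" "hi \<le> n" using gap_family_bounds[OF G g] by auto
  have outside: "x \<notin> gap_seats G" if "x + 1 = lo \<or> x = hi + 1" for x
  proof
    assume "x \<in> gap_seats G"
    then obtain h where h: "h \<in> G" "fst h \<le> x" "x \<le> snd h" by (auto simp: gap_seats_iff)
    with that b have "h \<noteq> (lo, hi)" by auto
    with gap_family_sep[OF G g h(1)] h that b show False by auto
  qed
  have "1 \<notin> gap_seats G" using gap_seats_subset[OF G] by auto
  then show "left_seat n lo \<in> filled" "right_seat n hi \<in> filled"
    using outside b filled by (auto simp: left_seat_def right_seat_def)
qed

lemma gap_family_first:
  assumes "gap_family n G" "G \<noteq> {}"
  obtains lo hi where "(lo, hi) \<in> G" "\<forall>g\<in>G. lo \<le> fst g"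
proof -
  have "finite (fst ` G)" using gap_family_finite[OF assms(1)] by simp
  then have "Min (fst ` G) \<in> fst ` G" "\<forall>g\<in>G. Min (fst ` G) \<le> fst g" using assms(2) by auto
  then show ?thesis using that by force
qed

definition fill_gap :: "(nat \<times> nat) set \<Rightarrow> nat \<Rightarrow> nat \<Rightarrow> nat \<Rightarrow> (nat \<times> nat) set" where
  "fill_gap G lo hi s = (G - {(lo, hi)}) \<union> (if lo < s then {(lo, s - 1)} else {})
     \<union> (if s < hi then {(s + 1, hi)} else {})"

lemma fill_gap_memE:
  assumes "h \<in> fill_gap G lo hi s"
  obtains "h \<in> G - {(lo, hi)}" | "lo < s" "h = (lo, s - 1)" | "s < hi" "h = (s + 1, hi)"
  using assms by (auto simp: fill_gap_def split: if_splits)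

lemma gap_family_fill_gap:
  assumes G: "gap_family n G" and g: "(lo, hi) \<in> G" and s: "lo \<le> s" "s \<le> hi"
  shows "gap_family n (fill_gap G lo hi s)"
proof -
  define P where "P = (if lo < s then {(lo, s - 1)} else {}) \<union> (if s < hi then {(s + 1, hi)} else {})"
  have F: "fill_gap G lo hi s = (G - {(lo, hi)}) \<union> P" by (simp add: fill_gap_def P_def)
  have b: "2 \<le> lo" "hi \<le> n" using gap_family_bounds[OF G g] by auto
  have P_inside: "lo \<le> fst h \<and> fst h \<le> snd h \<and> snd h \<le> hi" if "h \<in> P" for h
    using that s by (auto simp: P_def split: if_splits)
  have P_sep: "snd h + 1 < fst h' \<or> snd h' + 1 < fst h" if "h \<in> P" "h' \<in> P" "h \<noteq> h'" for h h'
    using that by (auto simp: P_def split: if_splits)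
  have PG_sep: "snd h + 1 < fst h' \<or> snd h' + 1 < fst h" if "h \<in> P" "h' \<in> G - {(lo, hi)}" for h h'
    using P_inside[OF that(1)] gap_family_sep[OF G g, of h'] that(2) by auto
  have "finite (fill_gap G lo hi s)" using gap_family_finite[OF G] by (simp add: F P_def)
  moreover have "\<forall>h\<in>fill_gap G lo hi s. 2 \<le> fst h \<and> fst h \<le> snd h \<and> snd h \<le> n"
  proof
    fix h assume "h \<in> fill_gap G lo hi s"
    then show "2 \<le> fst h \<and> fst h \<le> snd h \<and> snd h \<le> n"
      using gap_family_bounds[OF G, of h] P_inside[of h] b unfolding F by auto
  qed
  moreover have "\<forall>h\<in>fill_gap G lo hi s. \<forall>h'\<in>fill_gap G lo hi s.
      h \<noteq> h' \<longrightarrow> snd h + 1 < fst h' \<or> snd h' + 1 < fst h"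
  proof (intro ballI impI)
    fix h h' assume "h \<in> fill_gap G lo hi s" "h' \<in> fill_gap G lo hi s" "h \<noteq> h'"
    then show "snd h + 1 < fst h' \<or> snd h' + 1 < fst h"
      using P_sep[of h h'] PG_sep[of h h'] PG_sep[of h' h] gap_family_sep[OF G, of h h']
      unfolding F by auto
  qed
  ultimately show ?thesis by (simp add: gap_family_def)
qed

lemma gap_seats_fill_gap:
  assumes G: "gap_family n G" and g: "(lo, hi) \<in> G" and s: "lo \<le> s" "s \<le> hi"
  shows "gap_seats (fill_gap G lo hi s) = gap_seats G - {s}"
proof -
  have "gap_seats (fill_gap G lo hi s) = gap_seats (G - {(lo, hi)}) \<union>
      ((if lo < s then {lo..s - 1} else {}) \<union> (if s < hi then {s + 1..hi} else {}))"
    by (cases "lo < s"; cases "s < hi") (simp_all add: fill_gap_def gap_seats_Un gap_seats_insert Un_ac)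
  also have "\<dots> = gap_seats (G - {(lo, hi)}) \<union> ({lo..hi} - {s})" using s by auto
  finally have seats: "gap_seats (fill_gap G lo hi s) = gap_seats (G - {(lo, hi)}) \<union> ({lo..hi} - {s})" .
  have other: "snd h + 1 < lo \<or> hi + 1 < fst h" if "h \<in> G - {(lo, hi)}" for h
    using gap_family_sep[OF G g, of h] that by auto
  have "{lo..hi} \<inter> gap_seats (G - {(lo, hi)}) = {}"
    using other by (force simp: gap_seats_iff)
  moreover have "gap_seats G = {lo..hi} \<union> gap_seats (G - {(lo, hi)})"
    using g gap_seats_insert[of "(lo, hi)" "G - {(lo, hi)}"] by (simp add: insert_absorb)
  ultimately show ?thesis unfolding seats using s by auto
qed

lemma fill_gap_config:
  assumes G: "gap_family n G" and g: "(lo, hi) \<in> G" and s: "lo \<le> s" "s \<le> hi"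
    and filled: "filled = {1..n} - gap_seats G"
  shows "gap_family n (fill_gap G lo hi s)"
    and "insert s filled = {1..n} - gap_seats (fill_gap G lo hi s)"
    and "s \<in> {1..n} - filled"
proof -
  show "gap_family n (fill_gap G lo hi s)" by (rule gap_family_fill_gap[OF G g s])
  have "s \<in> gap_seats G" using g s by (force simp: gap_seats_iff)
  moreover have "gap_seats G \<subseteq> {1..n}" using gap_seats_subset[OF G] by auto
  ultimately show "insert s filled = {1..n} - gap_seats (fill_gap G lo hi s)"
    and "s \<in> {1..n} - filled"
    unfolding gap_seats_fill_gap[OF G g s] filled by blast+
qed

lemma nat_ceiling_half: "nat \<lceil>real i / 2\<rceil> = (i + 1) div 2"
proof -
  have "\<lceil>real i / 2\<rceil> = - (- int i div 2)"
    using ceiling_divide_eq_div[of "int i" 2] by simp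
  also have "\<dots> = int ((i + 1) div 2)" by presburger
  finally show ?thesis by simp
qed

lemma gap_seat_first_gap:
  assumes G: "gap_family n G" and filled: "filled = {1..n} - gap_seats G"
    and g: "(lo, hi) \<in> G" and first: "\<forall>g'\<in>G. lo \<le> fst g'"
  shows "gap_seat n filled = lo + (hi - lo) div 2"
proof -
  have b: "2 \<le> lo" "lo \<le> hi" "hi \<le> n" using gap_family_bounds[OF G g] by auto
  have seats: "{2..n} - filled = gap_seats G" using filled gap_seats_subset[OF G] by auto
  have "Min ({2..n} - filled) = lo"
  proof (rule Min_eqI)
    show "lo \<in> {2..n} - filled" using g b unfolding seats by (force simp: gap_seats_iff)
    show "lo \<le> x" if "x \<in> {2..n} - filled" for x
      using that first unfolding seats by (force simp: gap_seats_iff)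
  qed simp
  moreover have "(LEAST k. n < lo + k \<or> lo + k \<in> filled) = hi + 1 - lo"
  proof (rule Least_equality)
    show "n < lo + (hi + 1 - lo) \<or> lo + (hi + 1 - lo) \<in> filled"
      using gap_family_neighbours(2)[OF G g filled] b by (auto simp: right_seat_def split: if_splits)
    show "hi + 1 - lo \<le> k" if "n < lo + k \<or> lo + k \<in> filled" for k
    proof (rule ccontr)
      assume "\<not> hi + 1 - lo \<le> k"
      then have "lo + k \<in> gap_seats G" "lo + k \<le> n" using g b by (force simp: gap_seats_iff)+
      then show False using that filled by auto
    qed
  qed
  moreover have "lo + (hi + 1 - lo + 1) div 2 - 1 = lo + (hi - lo) div 2" using b by simp
  ultimately show ?thesis by (simp add: gap_seat_def nat_ceiling_half)
qed

definition closed_value :: "(nat \<times> nat) set \<Rightarrow> real" where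
  "closed_value G = (\<Sum>g\<in>G. closed_exp (snd g + 1 - fst g))"

lemma closed_value_remove:
  "finite G \<Longrightarrow> g \<in> G \<Longrightarrow> closed_value G = closed_exp (snd g + 1 - fst g) + closed_value (G - {g})"
  by (simp add: closed_value_def sum.remove)

lemma closed_value_insert:
  "finite G \<Longrightarrow> g \<notin> G \<Longrightarrow> closed_value (insert g G) = closed_exp (snd g + 1 - fst g) + closed_value G"
  by (simp add: closed_value_def)

(* A missing piece is counted as closed_exp 0 = 0. *)
lemma closed_value_fill_gap:
  assumes G: "gap_family n G" and g: "(lo, hi) \<in> G" and s: "lo \<le> s" "s \<le> hi"
  shows "closed_value (fill_gap G lo hi s) =
    closed_value (G - {(lo, hi)}) + closed_exp (s - lo) + closed_exp (hi - s)"
proof -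
  define G0 where "G0 = G - {(lo, hi)}"
  have fin: "finite G0" using gap_family_finite[OF G] by (simp add: G0_def)
  have left: "(lo, s - 1) \<notin> G0" if "lo < s"
    using gap_family_subinterval_notin[OF G g, of lo "s - 1"] that s by (simp add: G0_def)
  have right: "(s + 1, hi) \<notin> G0" if "s < hi"
    using gap_family_subinterval_notin[OF G g, of "s + 1" hi] that s by (simp add: G0_def)
  consider "lo < s" "s < hi" | "lo < s" "s = hi" | "lo = s" "s < hi" | "lo = s" "s = hi"
    using s by linarith
  then show ?thesis
  proof cases
    case 1
    then have "fill_gap G lo hi s = insert (lo, s - 1) (insert (s + 1, hi) G0)"
      by (auto simp: fill_gap_def G0_def)
    moreover have "(lo, s - 1) \<notin> insert (s + 1, hi) G0" using left 1 by auto
    ultimately show ?thesis using fin right 1 by (simp add: closed_value_insert G0_def)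
  next
    case 2
    then have "fill_gap G lo hi s = insert (lo, s - 1) G0" by (auto simp: fill_gap_def G0_def)
    then show ?thesis using fin left 2 by (simp add: closed_value_insert G0_def)
  next
    case 3
    then have "fill_gap G lo hi s = insert (s + 1, hi) G0" by (auto simp: fill_gap_def G0_def)
    then show ?thesis using fin right 3 by (simp add: closed_value_insert G0_def)
  next
    case 4
    then show ?thesis by (simp add: fill_gap_def G0_def)
  qed
qed

(* The napkins next to the seats lo..hi of a gap (lo, hi) are lo - 1, ..., hi; the first and
   the last of them lie on its boundary. *)
definition closed_gap :: "nat set \<Rightarrow> nat \<times> nat \<Rightarrow> bool" where
  "closed_gap taken g \<longleftrightarrow>
     fst g - 1 \<in> taken \<and> snd g \<in> taken \<and> (\<forall>k. fst g \<le> k \<and> k < snd g \<longrightarrow> k \<notin> taken)"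

lemma closed_gap_insert_napkin:
  assumes G: "gap_family n G" and g: "(lo, hi) \<in> G" and h: "h \<in> G - {(lo, hi)}"
    and k: "lo - 1 \<le> k" "k \<le> hi" and closed: "closed_gap taken h"
  shows "closed_gap (insert k taken) h"
  using gap_family_sep[OF G g, of h] gap_family_bounds[OF G g] h k closed
  by (auto simp: closed_gap_def)

definition closed_config :: "nat \<Rightarrow> (nat \<times> nat) set \<Rightarrow> nat set \<Rightarrow> nat set \<Rightarrow> bool" where
  "closed_config n G filled taken \<longleftrightarrow>
     gap_family n G \<and> filled = {1..n} - gap_seats G \<and> (\<forall>g\<in>G. closed_gap taken g)"

(* The previous diner p sits next to the run and took the napkin facing away from it. *)
definition run_gap :: "nat \<Rightarrow> nat set \<Rightarrow> nat \<Rightarrow> nat \<Rightarrow> nat \<Rightarrow> int \<Rightarrow> bool" where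
  "run_gap n taken lo hi p q \<longleftrightarrow> (\<forall>k. lo \<le> k \<and> k < hi \<longrightarrow> k \<notin> taken) \<and>
     (q = 1 \<and> p = right_seat n hi \<and> hi \<notin> taken \<and> lo - 1 \<in> taken \<or>
      q = -1 \<and> p = left_seat n lo \<and> lo - 1 \<notin> taken \<and> hi \<in> taken)"

definition run_config ::
    "nat \<Rightarrow> (nat \<times> nat) set \<Rightarrow> nat \<Rightarrow> nat \<Rightarrow> nat set \<Rightarrow> nat set \<Rightarrow> nat \<Rightarrow> int \<Rightarrow> bool" where
  "run_config n G lo hi filled taken p q \<longleftrightarrow>
     gap_family n G \<and> (lo, hi) \<in> G \<and> filled = {1..n} - gap_seats G \<and>
     (\<forall>g\<in>G - {(lo, hi)}. closed_gap taken g) \<and> run_gap n taken lo hi p q"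

definition opposite_seat :: "nat \<Rightarrow> nat \<Rightarrow> int \<Rightarrow> nat" where
  "opposite_seat n p q = (if q = 1 then left_seat n p else right_seat n p)"

lemma next_seat_eq:
  "next_seat n filled p q =
    (if opposite_seat n p q \<notin> filled then opposite_seat n p q else gap_seat n filled)"
  by (simp add: next_seat_def opposite_seat_def Let_def)

lemma run_config_next_seat:
  assumes R: "run_config n G lo hi filled taken p q"
  shows "next_seat n filled p q = (if q = 1 then hi else lo)"
proof -
  have G: "gap_family n G" and g: "(lo, hi) \<in> G" and filled: "filled = {1..n} - gap_seats G"
    and run: "q = 1 \<and> p = right_seat n hi \<or> q = -1 \<and> p = left_seat n lo"
    using R by (auto simp: run_config_def run_gap_def)
  have b: "2 \<le> lo" "lo \<le> hi" "hi \<le> n" using gap_family_bounds[OF G g] by auto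
  then have "lo \<notin> filled" "hi \<notin> filled" using g filled by (force simp: gap_seats_iff)+
  moreover have "left_seat n (right_seat n hi) = hi" "right_seat n (left_seat n lo) = lo"
    using b by (auto simp: left_seat_def right_seat_def)
  ultimately show ?thesis
    using run by (auto simp: next_seat_eq opposite_seat_def)
qed

(* v is the expected number of napkinless diners among those still to be seated (see
   total_napkinless_valued). In a closed state the next diner is seated by S3, or by S2 in a
   closed gap of a single seat. *)
definition valued_state :: "nat \<Rightarrow> nat set \<Rightarrow> nat set \<Rightarrow> nat \<Rightarrow> int \<Rightarrow> real \<Rightarrow> bool" where
  "valued_state n filled taken p q v \<longleftrightarrow>
    (\<exists>G. closed_config n G filled taken \<and>
       (opposite_seat n p q \<in> filled \<or> (opposite_seat n p q, opposite_seat n p q) \<in> G) \<and>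
       v = closed_value G) \<or>
    (\<exists>G lo hi. run_config n G lo hi filled taken p q \<and>
       v = closed_value (G - {(lo, hi)}) + run_exp (hi + 1 - lo))"

lemma valued_state_closedI:
  "closed_config n G filled taken \<Longrightarrow>
   opposite_seat n p q \<in> filled \<or> (opposite_seat n p q, opposite_seat n p q) \<in> G \<Longrightarrow>
   valued_state n filled taken p q (closed_value G)"
  by (auto simp: valued_state_def)

lemma valued_state_runI:
  "run_config n G lo hi filled taken p q \<Longrightarrow>
   valued_state n filled taken p q (closed_value (G - {(lo, hi)}) + run_exp (hi + 1 - lo))"
  unfolding valued_state_def by blast

lemma valued_stateE:
  assumes "valued_state n filled taken p q v"
  obtains (closed) G where "closed_config n G filled taken"
      "opposite_seat n p q \<in> filled \<or> (opposite_seat n p q, opposite_seat n p q) \<in> G"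
      "v = closed_value G"
    | (run) G lo hi where "run_config n G lo hi filled taken p q"
      "v = closed_value (G - {(lo, hi)}) + run_exp (hi + 1 - lo)"
  using assms unfolding valued_state_def by blast

definition valued_move :: "nat \<Rightarrow> nat set \<Rightarrow> nat set \<Rightarrow> nat \<Rightarrow> real \<Rightarrow> bool" where
  "valued_move n filled taken s v \<longleftrightarrow> s \<in> {1..n} - filled \<and>
    (\<exists>T1 c1 T2 c2 v1 v2.
       take_napkin n taken s (-1) = (T1, c1) \<and> take_napkin n taken s 1 = (T2, c2) \<and>
       valued_state n (insert s filled) T1 s (-1) v1 \<and> valued_state n (insert s filled) T2 s 1 v2 \<and>
       2 * v = real c1 + v1 + real c2 + v2)"

lemma valued_moveI:
  assumes "s \<in> {1..n} - filled"
    and "take_napkin n taken s (-1) = (T1, c1)" and "take_napkin n taken s 1 = (T2, c2)"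
    and "valued_state n (insert s filled) T1 s (-1) v1" and "valued_state n (insert s filled) T2 s 1 v2"
    and "2 * v = real c1 + v1 + real c2 + v2"
  shows "valued_move n filled taken s v"
  using assms unfolding valued_move_def by blast

lemma valued_state_fill_closed:
  assumes G: "gap_family n G" and g: "(lo, hi) \<in> G" and filled: "filled = {1..n} - gap_seats G"
    and others: "\<forall>h\<in>G - {(lo, hi)}. closed_gap taken h"
    and s: "lo \<le> s" "s \<le> hi" and k: "lo - 1 \<le> k" "k \<le> hi"
    and left: "lo < s \<Longrightarrow> closed_gap (insert k taken) (lo, s - 1)"
    and right: "s < hi \<Longrightarrow> closed_gap (insert k taken) (s + 1, hi)"
    and opp: "opposite_seat n s x \<in> insert s filled \<or>
      (opposite_seat n s x, opposite_seat n s x) \<in> fill_gap G lo hi s"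
  shows "valued_state n (insert s filled) (insert k taken) s x
    (closed_value (G - {(lo, hi)}) + closed_exp (s - lo) + closed_exp (hi - s))"
proof -
  have "closed_gap (insert k taken) h" if "h \<in> fill_gap G lo hi s" for h
    using that
  proof (cases rule: fill_gap_memE)
    case 1
    then show ?thesis using closed_gap_insert_napkin[OF G g _ k] others by blast
  qed (use left right in simp_all)
  then have "closed_config n (fill_gap G lo hi s) (insert s filled) (insert k taken)"
    using fill_gap_config[OF G g s filled] by (simp add: closed_config_def)
  from valued_state_closedI[OF this opp] show ?thesis
    by (simp add: closed_value_fill_gap[OF G g s])
qed

lemma valued_state_left_run:
  assumes G: "gap_family n G" and g: "(lo, hi) \<in> G" and filled: "filled = {1..n} - gap_seats G"
    and others: "\<forall>h\<in>G - {(lo, hi)}. closed_gap taken h"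
    and s: "lo < s" "s \<le> hi"
    and free: "\<forall>k. lo \<le> k \<and> k < hi \<longrightarrow> k \<notin> taken" "s \<notin> taken"
    and ends: "lo - 1 \<in> taken" "s < hi \<Longrightarrow> hi \<in> taken"
  shows "valued_state n (insert s filled) (insert s taken) s 1
    (closed_value (G - {(lo, hi)}) + closed_exp (hi - s) + run_exp (s - lo))"
proof -
  define F where "F = fill_gap G lo hi s"
  have piece: "(lo, s - 1) \<in> F" using s by (simp add: F_def fill_gap_def)
  have "lo \<le> s - 1" "s - 1 < hi" using s by linarith+
  with free(1) have napkin: "s - 1 \<notin> taken" by blast
  have "closed_gap (insert s taken) h" if "h \<in> F - {(lo, s - 1)}" for h
  proof -
    from that have "h \<in> fill_gap G lo hi s" "h \<noteq> (lo, s - 1)" by (auto simp: F_def)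
    then consider "h \<in> G - {(lo, hi)}" | "s < hi" "h = (s + 1, hi)" by (metis fill_gap_memE)
    then show ?thesis
    proof cases
      case 1
      then show ?thesis using closed_gap_insert_napkin[OF G g 1, where k = s] others s by auto
    next
      case 2
      then show ?thesis using free ends s by (auto simp: closed_gap_def)
    qed
  qed
  moreover have "run_gap n (insert s taken) lo (s - 1) s 1"
    using free ends s napkin gap_family_bounds[OF G g] by (auto simp: run_gap_def right_seat_def)
  ultimately have "run_config n F lo (s - 1) (insert s filled) (insert s taken) s 1"
    using fill_gap_config[OF G g _ s(2) filled] s piece by (simp add: run_config_def F_def)
  moreover have "closed_value F = closed_exp (s - lo) + closed_value (F - {(lo, s - 1)})"
    using closed_value_remove[OF _ piece] fill_gap_config(1)[OF G g _ s(2) filled] s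
    by (simp add: F_def gap_family_finite)
  ultimately show ?thesis
    using valued_state_runI closed_value_fill_gap[OF G g _ s(2)] s unfolding F_def by fastforce
qed

lemma valued_state_right_run:
  assumes G: "gap_family n G" and g: "(lo, hi) \<in> G" and filled: "filled = {1..n} - gap_seats G"
    and others: "\<forall>h\<in>G - {(lo, hi)}. closed_gap taken h"
    and s: "lo \<le> s" "s < hi"
    and free: "\<forall>k. lo \<le> k \<and> k < hi \<longrightarrow> k \<notin> taken" "s - 1 \<notin> taken"
    and ends: "hi \<in> taken" "lo < s \<Longrightarrow> lo - 1 \<in> taken"
  shows "valued_state n (insert s filled) (insert (s - 1) taken) s (-1)
    (closed_value (G - {(lo, hi)}) + closed_exp (s - lo) + run_exp (hi - s))"
proof -
  define F where "F = fill_gap G lo hi s"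
  have piece: "(s + 1, hi) \<in> F" using s by (simp add: F_def fill_gap_def)
  have "closed_gap (insert (s - 1) taken) h" if "h \<in> F - {(s + 1, hi)}" for h
  proof -
    from that have "h \<in> fill_gap G lo hi s" "h \<noteq> (s + 1, hi)" by (auto simp: F_def)
    then consider "h \<in> G - {(lo, hi)}" | "lo < s" "h = (lo, s - 1)" by (metis fill_gap_memE)
    then show ?thesis
    proof cases
      case 1
      then show ?thesis using closed_gap_insert_napkin[OF G g 1, where k = "s - 1"] others s by auto
    next
      case 2
      then show ?thesis using free ends s by (auto simp: closed_gap_def)
    qed
  qed
  moreover have "run_gap n (insert (s - 1) taken) (s + 1) hi s (-1)"
    using free ends s gap_family_bounds[OF G g] by (auto simp: run_gap_def left_seat_def)
  ultimately have "run_config n F (s + 1) hi (insert s filled) (insert (s - 1) taken) s (-1)"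
    using fill_gap_config[OF G g s(1) _ filled] s piece by (simp add: run_config_def F_def)
  moreover have "closed_value F = closed_exp (hi - s) + closed_value (F - {(s + 1, hi)})"
    using closed_value_remove[OF _ piece] fill_gap_config(1)[OF G g s(1) _ filled] s
    by (simp add: F_def gap_family_finite)
  ultimately show ?thesis
    using valued_state_runI closed_value_fill_gap[OF G g s(1)] s unfolding F_def by fastforce
qed

lemma valued_move_closed_single:
  assumes C: "closed_config n G filled taken" and t: "(t, t) \<in> G"
  shows "valued_move n filled taken t (closed_value G)"
proof -
  have G: "gap_family n G" and filled: "filled = {1..n} - gap_seats G"
    and closed: "\<forall>g\<in>G. closed_gap taken g"
    using C by (auto simp: closed_config_def)
  have napkins_t: "t - 1 \<in> taken" "t \<in> taken" using closed t by (auto simp: closed_gap_def)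
  moreover have "2 \<le> t" using gap_family_bounds[OF G t] by simp
  ultimately have napkins: "take_napkin n taken t x = (taken, 1)" for x
    by (simp add: take_napkin_def left_napkin_def right_napkin_def Let_def)
  have opp: "opposite_seat n t x \<in> insert t filled" for x
    using gap_family_neighbours[OF G t filled] by (auto simp: opposite_seat_def)
  have states: "valued_state n (insert t filled) taken t x (closed_value (G - {(t, t)}))" for x
  proof -
    have "valued_state n (insert t filled) (insert (t - 1) taken) t x
        (closed_value (G - {(t, t)}) + closed_exp (t - t) + closed_exp (t - t))"
      by (rule valued_state_fill_closed[OF G t filled]) (use closed opp in auto)
    then show ?thesis using napkins_t by (simp add: insert_absorb)
  qed
  have "closed_value G = 1 + closed_value (G - {(t, t)})"
    using closed_value_remove[OF gap_family_finite[OF G] t] by simp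
  then show ?thesis
    using valued_moveI[OF fill_gap_config(3)[OF G t order.refl order.refl filled] napkins napkins
        states states] by simp
qed

lemma valued_move_closed_pair:
  assumes C: "closed_config n G filled taken" and g: "(m, m + 1) \<in> G"
  shows "valued_move n filled taken m (closed_value G)"
proof -
  have G: "gap_family n G" and filled: "filled = {1..n} - gap_seats G"
    and closed: "\<forall>g\<in>G. closed_gap taken g"
    using C by (auto simp: closed_config_def)
  have b: "2 \<le> m" "m + 1 \<le> n" using gap_family_bounds[OF G g] by auto
  have napkins_g: "m - 1 \<in> taken" "m + 1 \<in> taken" "m \<notin> taken"
    using closed g by (auto simp: closed_gap_def)
  then have napkins: "take_napkin n taken m x = (insert m taken, 0)" for x
    using b by (simp add: take_napkin_def left_napkin_def right_napkin_def Let_def)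
  have "opposite_seat n m 1 \<in> insert m filled"
    using gap_family_neighbours(1)[OF G g filled] by (simp add: opposite_seat_def)
  moreover have "(opposite_seat n m (-1), opposite_seat n m (-1)) \<in> fill_gap G m (m + 1) m"
    using b by (simp add: opposite_seat_def right_seat_def fill_gap_def)
  ultimately have opp: "opposite_seat n m x \<in> insert m filled \<or>
      (opposite_seat n m x, opposite_seat n m x) \<in> fill_gap G m (m + 1) m"
    if "x = 1 \<or> x = -1" for x
    using that by auto
  have "valued_state n (insert m filled) (insert m taken) m x
      (closed_value (G - {(m, m + 1)}) + closed_exp (m - m) + closed_exp (m + 1 - m))"
    if "x = 1 \<or> x = -1" for x
    by (rule valued_state_fill_closed[OF G g filled])
      (use closed napkins_g opp[OF that] in \<open>auto simp: closed_gap_def\<close>)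
  then have states: "valued_state n (insert m filled) (insert m taken) m x
      (closed_value (G - {(m, m + 1)}) + 1)" if "x = 1 \<or> x = -1" for x
    using that by simp
  have "closed_value G = 1 + closed_value (G - {(m, m + 1)})"
    using closed_value_remove[OF gap_family_finite[OF G] g] by (simp add: numeral_2_eq_2)
  then show ?thesis
    using valued_moveI[OF fill_gap_config(3)[OF G g order.refl _ filled] napkins napkins
        states states] by simp
qed

lemma valued_move_closed_split:
  assumes C: "closed_config n G filled taken" and g: "(lo, hi) \<in> G" and long: "lo + 2 \<le> hi"
  defines "s \<equiv> lo + (hi - lo) div 2"
  shows "valued_move n filled taken s (closed_value G)"
proof -
  have G: "gap_family n G" and filled: "filled = {1..n} - gap_seats G"
    and closed: "\<forall>g\<in>G. closed_gap taken g"
    using C by (auto simp: closed_config_def)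
  have s: "lo < s" "s < hi" using long unfolding s_def by linarith+
  have others: "\<forall>h\<in>G - {(lo, hi)}. closed_gap taken h" using closed by blast
  have napkins_g: "lo - 1 \<in> taken" "hi \<in> taken" "\<forall>k. lo \<le> k \<and> k < hi \<longrightarrow> k \<notin> taken"
    using closed g by (auto simp: closed_gap_def)
  moreover have "lo \<le> s - 1" "s - 1 < hi" using s by auto
  ultimately have "s - 1 \<notin> taken" "s \<notin> taken" using s by auto
  moreover have "2 \<le> lo" using gap_family_bounds[OF G g] by simp
  ultimately have napkin_left: "take_napkin n taken s (-1) = (insert (s - 1) taken, 0)"
    and napkin_right: "take_napkin n taken s 1 = (insert s taken, 0)"
    using s by (simp_all add: take_napkin_def left_napkin_def right_napkin_def Let_def)
  note left = valued_state_right_run[OF G g filled others less_imp_le(1)[OF s(1)] s(2) napkins_g(3)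
      \<open>s - 1 \<notin> taken\<close> napkins_g(2,1)]
  note right = valued_state_left_run[OF G g filled others s(1) less_imp_le[OF s(2)] napkins_g(3)
      \<open>s \<notin> taken\<close> napkins_g(1,2)]
  have "closed_value G = closed_exp (Suc (hi - lo)) + closed_value (G - {(lo, hi)})"
    using closed_value_remove[OF gap_family_finite[OF G] g] s by (simp add: Suc_diff_le)
  moreover have "closed_exp (Suc (hi - lo)) =
      (run_exp (s - lo) + closed_exp (hi - s) + closed_exp (s - lo) + run_exp (hi - s)) / 2"
    using closed_exp_split[of "hi - lo"] long unfolding s_def by simp
  ultimately show ?thesis
    using valued_moveI[OF fill_gap_config(3)[OF G g _ _ filled] napkin_left napkin_right left right] s
    by (simp add: field_simps)
qed

lemma valued_move_closed_gap:
  assumes C: "closed_config n G filled taken" and g: "(lo, hi) \<in> G"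
  shows "valued_move n filled taken (lo + (hi - lo) div 2) (closed_value G)"
proof -
  have "lo \<le> hi" using C g by (auto simp: closed_config_def dest: gap_family_bounds)
  then consider "hi = lo" | "hi = lo + 1" | "lo + 2 \<le> hi" by linarith
  then show ?thesis
  proof cases
    case 1
    then show ?thesis using valued_move_closed_single[OF C] g by simp
  next
    case 2
    then show ?thesis using valued_move_closed_pair[OF C] g by simp
  next
    case 3
    then show ?thesis using valued_move_closed_split[OF C g] by simp
  qed
qed

lemma valued_move_run_last:
  assumes R: "run_config n G t t filled taken p q"
  shows "valued_move n filled taken t (closed_value (G - {(t, t)}))"
proof -
  have G: "gap_family n G" and t: "(t, t) \<in> G" and filled: "filled = {1..n} - gap_seats G"
    and others: "\<forall>h\<in>G - {(t, t)}. closed_gap taken h" and run: "run_gap n taken t t p q"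
    using R by (auto simp: run_config_def)
  have "2 \<le> t" using gap_family_bounds[OF G t] by simp
  from run consider "t \<notin> taken" "t - 1 \<in> taken" | "t - 1 \<notin> taken" "t \<in> taken"
    by (auto simp: run_gap_def)
  then obtain k where k: "k = t - 1 \<or> k = t"
    and napkins: "\<And>x. take_napkin n taken t x = (insert k taken, 0)"
  proof cases
    case 1
    then show ?thesis
      using that[of t] \<open>2 \<le> t\<close> by (simp add: take_napkin_def left_napkin_def right_napkin_def Let_def)
  next
    case 2
    then show ?thesis
      using that[of "t - 1"] \<open>2 \<le> t\<close>
      by (simp add: take_napkin_def left_napkin_def right_napkin_def Let_def)
  qed
  have "opposite_seat n t x \<in> insert t filled" for x
    using gap_family_neighbours[OF G t filled] by (auto simp: opposite_seat_def)
  then have "valued_state n (insert t filled) (insert k taken) t x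
      (closed_value (G - {(t, t)}) + closed_exp (t - t) + closed_exp (t - t))" for x
    by (intro valued_state_fill_closed[OF G t filled others]) (use k in auto)
  then have states: "valued_state n (insert t filled) (insert k taken) t x
      (closed_value (G - {(t, t)}))" for x
    by simp
  show ?thesis
    using valued_moveI[OF fill_gap_config(3)[OF G t order.refl order.refl filled] napkins napkins
        states states] by simp
qed

lemma valued_move_run_right:
  assumes R: "run_config n G lo hi filled taken p 1" and long: "lo < hi"
  shows "valued_move n filled taken hi (closed_value (G - {(lo, hi)}) + run_exp (hi + 1 - lo))"
proof -
  have G: "gap_family n G" and g: "(lo, hi) \<in> G" and filled: "filled = {1..n} - gap_seats G"
    and others: "\<forall>h\<in>G - {(lo, hi)}. closed_gap taken h"
    and free: "\<forall>k. lo \<le> k \<and> k < hi \<longrightarrow> k \<notin> taken" and ends: "hi \<notin> taken" "lo - 1 \<in> taken"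
    using R by (auto simp: run_config_def run_gap_def)
  have "2 \<le> lo" using gap_family_bounds[OF G g] by simp
  have "lo \<le> hi - 1" "hi - 1 < hi" using long by linarith+
  with free have "hi - 1 \<notin> taken" by blast
  then have napkin_left: "take_napkin n taken hi (-1) = (insert (hi - 1) taken, 0)"
    and napkin_right: "take_napkin n taken hi 1 = (insert hi taken, 0)"
    using ends long \<open>2 \<le> lo\<close>
    by (simp_all add: take_napkin_def left_napkin_def right_napkin_def Let_def)
  have "opposite_seat n hi (-1) \<in> insert hi filled"
    using gap_family_neighbours(2)[OF G g filled] by (simp add: opposite_seat_def)
  then have left: "valued_state n (insert hi filled) (insert (hi - 1) taken) hi (-1)
      (closed_value (G - {(lo, hi)}) + closed_exp (hi - lo) + closed_exp (hi - hi))"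
    by (intro valued_state_fill_closed[OF G g filled others])
      (use long free ends \<open>hi - 1 \<notin> taken\<close> in \<open>auto simp: closed_gap_def\<close>)
  have right: "valued_state n (insert hi filled) (insert hi taken) hi 1
      (closed_value (G - {(lo, hi)}) + closed_exp (hi - hi) + run_exp (hi - lo))"
    by (rule valued_state_left_run[OF G g filled others long order.refl free ends]) simp
  have "run_exp (hi + 1 - lo) = (run_exp (hi - lo) + closed_exp (hi - lo)) / 2"
    using long by (simp add: Suc_diff_le)
  then show ?thesis
    using valued_moveI[OF fill_gap_config(3)[OF G g _ order.refl filled] napkin_left napkin_right
        left right] long
    by (simp add: field_simps)
qed

lemma valued_move_run_left:
  assumes R: "run_config n G lo hi filled taken p (-1)" and long: "lo < hi"
  shows "valued_move n filled taken lo (closed_value (G - {(lo, hi)}) + run_exp (hi + 1 - lo))"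
proof -
  have G: "gap_family n G" and g: "(lo, hi) \<in> G" and filled: "filled = {1..n} - gap_seats G"
    and others: "\<forall>h\<in>G - {(lo, hi)}. closed_gap taken h"
    and free: "\<forall>k. lo \<le> k \<and> k < hi \<longrightarrow> k \<notin> taken" and ends: "hi \<in> taken" "lo - 1 \<notin> taken"
    using R by (auto simp: run_config_def run_gap_def)
  have "2 \<le> lo" using gap_family_bounds[OF G g] by simp
  have "lo \<notin> taken" using free long by blast
  then have napkin_left: "take_napkin n taken lo (-1) = (insert (lo - 1) taken, 0)"
    and napkin_right: "take_napkin n taken lo 1 = (insert lo taken, 0)"
    using ends \<open>2 \<le> lo\<close>
    by (simp_all add: take_napkin_def left_napkin_def right_napkin_def Let_def)
  have "opposite_seat n lo 1 \<in> insert lo filled"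
    using gap_family_neighbours(1)[OF G g filled] by (simp add: opposite_seat_def)
  then have right: "valued_state n (insert lo filled) (insert lo taken) lo 1
      (closed_value (G - {(lo, hi)}) + closed_exp (lo - lo) + closed_exp (hi - lo))"
    by (intro valued_state_fill_closed[OF G g filled others])
      (use long free ends \<open>lo \<notin> taken\<close> in \<open>auto simp: closed_gap_def\<close>)
  have left: "valued_state n (insert lo filled) (insert (lo - 1) taken) lo (-1)
      (closed_value (G - {(lo, hi)}) + closed_exp (lo - lo) + run_exp (hi - lo))"
    by (rule valued_state_right_run[OF G g filled others order.refl long free ends(2,1)]) simp
  have "run_exp (hi + 1 - lo) = (run_exp (hi - lo) + closed_exp (hi - lo)) / 2"
    using long by (simp add: Suc_diff_le)
  then show ?thesis
    using valued_moveI[OF fill_gap_config(3)[OF G g order.refl _ filled] napkin_left napkin_right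
        left right] long
    by (simp add: field_simps)
qed

lemma valued_move_closed_next:
  assumes C: "closed_config n G filled taken" and nonfull: "\<not> {1..n} \<subseteq> filled"
    and opp: "opposite_seat n p q \<in> filled \<or> (opposite_seat n p q, opposite_seat n p q) \<in> G"
  shows "valued_move n filled taken (next_seat n filled p q) (closed_value G)"
proof -
  have G: "gap_family n G" and filled: "filled = {1..n} - gap_seats G"
    using C by (auto simp: closed_config_def)
  from opp show ?thesis
  proof
    assume "opposite_seat n p q \<in> filled"
    then have next_seat: "next_seat n filled p q = gap_seat n filled" by (simp add: next_seat_eq)
    have "G \<noteq> {}"
    proof
      assume "G = {}"
      then have "filled = {1..n}" using filled by (simp add: gap_seats_def)
      then show False using nonfull by simp
    qed
    then obtain lo hi where g: "(lo, hi) \<in> G" and first: "\<forall>g\<in>G. lo \<le> fst g"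
      using gap_family_first[OF G] by blast
    show ?thesis
      using valued_move_closed_gap[OF C g] gap_seat_first_gap[OF G filled g first] next_seat
      by simp
  next
    assume t: "(opposite_seat n p q, opposite_seat n p q) \<in> G"
    then have "opposite_seat n p q \<notin> filled" using filled by (force simp: gap_seats_iff)
    then show ?thesis using valued_move_closed_single[OF C t] by (simp add: next_seat_eq)
  qed
qed

lemma valued_move_run_next:
  assumes R: "run_config n G lo hi filled taken p q"
  shows "valued_move n filled taken (next_seat n filled p q)
    (closed_value (G - {(lo, hi)}) + run_exp (hi + 1 - lo))"
proof -
  have "lo \<le> hi" "q = 1 \<or> q = -1"
    using R by (auto simp: run_config_def run_gap_def dest: gap_family_bounds)
  then consider "lo = hi" | "lo < hi" "q = 1" | "lo < hi" "q = -1" by linarith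
  then show ?thesis
  proof cases
    case 1
    then show ?thesis using valued_move_run_last R run_config_next_seat[OF R] by simp
  next
    case 2
    then show ?thesis using valued_move_run_right R run_config_next_seat[OF R] by simp
  next
    case 3
    then show ?thesis using valued_move_run_left R run_config_next_seat[OF R] by simp
  qed
qed

lemma valued_state_step:
  assumes "valued_state n filled taken p q v" and "\<not> {1..n} \<subseteq> filled"
  shows "valued_move n filled taken (next_seat n filled p q) v"
  using assms(1)
proof (cases rule: valued_stateE)
  case (closed G)
  then show ?thesis using valued_move_closed_next assms(2) by blast
next
  case (run G lo hi)
  then show ?thesis using valued_move_run_next by blast
qed

lemma valued_state_full:
  assumes V: "valued_state n filled taken p q v" and full: "{1..n} \<subseteq> filled"
  shows "v = 0"
  using V
proof (cases rule: valued_stateE)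
  case (closed G)
  then have G: "gap_family n G" and filled: "filled = {1..n} - gap_seats G"
    by (auto simp: closed_config_def)
  have "gap_seats G \<subseteq> {1..n}" using gap_seats_subset[OF G] by auto
  with full filled have "gap_seats G = {}" by blast
  then have "G = {}" using gap_family_empty_iff[OF G] by blast
  then show ?thesis using closed(3) by (simp add: closed_value_def)
next
  case (run G lo hi)
  then have "lo \<in> {1..n} - filled"
    using gap_family_bounds[of n G "(lo, hi)"] by (force simp: run_config_def gap_seats_iff)
  then show ?thesis using full by blast
qed

lemma total_napkinless_valued:
  assumes "valued_state n filled taken p q v" and "card ({1..n} - filled) = L"
  shows "total_napkinless n filled taken p q L = 2 ^ L * v"
  using assms
proof (induction L arbitrary: filled taken p q v)
  case 0
  then have "{1..n} \<subseteq> filled" by auto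
  then show ?case using valued_state_full[OF "0.prems"(1)] by (simp add: total_napkinless_0)
next
  case (Suc L)
  define s where "s = next_seat n filled p q"
  have "{1..n} - filled \<noteq> {}" using Suc.prems(2) by (metis card.empty nat.distinct(1))
  then have "\<not> {1..n} \<subseteq> filled" by blast
  with Suc.prems(1) have "valued_move n filled taken s v" unfolding s_def by (rule valued_state_step)
  then obtain T1 c1 T2 c2 v1 v2 where s: "s \<in> {1..n} - filled"
    and t1: "take_napkin n taken s (-1) = (T1, c1)" and t2: "take_napkin n taken s 1 = (T2, c2)"
    and v1: "valued_state n (insert s filled) T1 s (-1) v1"
    and v2: "valued_state n (insert s filled) T2 s 1 v2"
    and v: "2 * v = real c1 + v1 + real c2 + v2"
    unfolding valued_move_def by blast
  have "{1..n} - insert s filled = ({1..n} - filled) - {s}" by blast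
  then have "card ({1..n} - insert s filled) = L" using Suc.prems(2) s by simp
  then have "total_napkinless n filled taken p q (Suc L) =
      2 ^ L * (real c1 + real c2) + 2 ^ L * v1 + 2 ^ L * v2"
    using total_napkinless_Suc[OF s_def t1 t2] Suc.IH[OF v1] Suc.IH[OF v2] by simp
  also have "\<dots> = 2 ^ L * (2 * v)" unfolding v by (simp add: algebra_simps)
  also have "\<dots> = 2 ^ Suc L * v" by simp
  finally show ?case .
qed

lemma valued_state_initial:
  assumes n: "1 \<le> n" and first: "T = {1} \<and> x = 1 \<or> T = {n} \<and> x = -1"
  shows "valued_state n {1} T 1 x (run_exp (n - 1))"
proof (cases "n = 1")
  case True
  then have "closed_config n {} {1} T"
    by (simp add: closed_config_def gap_family_def gap_seats_def)
  moreover have "opposite_seat n 1 x \<in> {1}"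
    using True by (simp add: opposite_seat_def left_seat_def right_seat_def)
  ultimately show ?thesis
    using valued_state_closedI[of n "{}" "{1}" T 1 x] True by (simp add: closed_value_def)
next
  case False
  with n have n2: "2 \<le> n" by simp
  then have "gap_family n {(2, n)}" "{1} = {1..n} - gap_seats {(2, n)}"
    by (auto simp: gap_family_def gap_seats_def)
  moreover have "run_gap n T 2 n 1 x"
    using first n2 unfolding run_gap_def by (auto simp: left_seat_def right_seat_def)
  ultimately have "run_config n {(2, n)} 2 n {1} T 1 x" by (simp add: run_config_def)
  from valued_state_runI[OF this] show ?thesis
    using n2 by (simp add: closed_value_def numeral_2_eq_2)
qed

lemma E_S_eq_run_exp:
  assumes "1 \<le> n"
  shows "E_S n = run_exp (n - 1)"
proof -
  obtain L where n: "n = Suc L" using assms by (cases n) auto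
  have "take_napkin n {} 1 (-1) = ({n}, 0)" "take_napkin n {} 1 1 = ({1}, 0)"
    by (simp_all add: take_napkin_def left_napkin_def right_napkin_def Let_def)
  then have "(\<Sum>\<sigma>\<in>pref_orders n. real (nu_S \<sigma>)) =
      total_napkinless n {1} {n} 1 (-1) L + total_napkinless n {1} {1} 1 1 L"
    unfolding n sum_pref_orders_Suc total_napkinless_def
    by (intro arg_cong2[where f = "(+)"] sum.cong) (auto simp: nu_S_def pref_orders_def n)
  moreover have "card ({1..n} - {1}) = L" using n by simp
  then have "total_napkinless n {1} T 1 x L = 2 ^ L * run_exp L"
    if "T = {1} \<and> x = 1 \<or> T = {n} \<and> x = -1" for T x
    using total_napkinless_valued[OF valued_state_initial[OF assms that]] n by simp
  ultimately show ?thesis by (simp add: E_S_def n)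
qed

lemma nat_floor_half: "nat \<lfloor>real i / 2\<rfloor> = i div 2"
  using floor_divide_of_nat_eq[of i 2, where 'a = real] by simp

lemma E_S_recurrence:
  assumes "5 \<le> n"
  shows "E_S n = (1/2) * (E_S (n - 1) + E_S (nat \<lfloor>real (n + 1) / 2\<rfloor>)
    + E_S (nat \<lceil>real (n + 1) / 2\<rceil>))"
proof -
  define i where "i = n - 3"
  have i: "2 \<le> i" "n = Suc (Suc (Suc i))" using assms by (simp_all add: i_def)
  have "nat \<lfloor>real (n + 1) / 2\<rfloor> = Suc (Suc (i div 2))"
    using nat_floor_half[of "n + 1"] i by simp
  moreover have "nat \<lceil>real (n + 1) / 2\<rceil> = Suc (Suc ((i + 1) div 2))"
    using nat_ceiling_half[of "n + 1"] i by simp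
  moreover have "E_S (Suc (Suc k)) = run_exp (Suc k)" for k by (simp add: E_S_eq_run_exp)
  ultimately show ?thesis
    using run_exp_recurrence[OF i(1)] i(2) by (simp del: run_exp.simps)
qed

theorem proposition5:
  shows "E_S 1 = 0 \<and> E_S 2 = 0 \<and> E_S 3 = 1/2 \<and> E_S 4 = 3/4 \<and>
    (\<forall>n::nat. n \<ge> 5 \<longrightarrow>
      E_S n = (1/2) * (E_S (n - 1) + E_S (nat \<lfloor>real (n + 1) / 2\<rfloor>)
                        + E_S (nat \<lceil>real (n + 1) / 2\<rceil>)))"
  using E_S_recurrence by (simp add: E_S_eq_run_exp eval_nat_numeral)

end
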